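(* Let $G$ and $H$ be graphs, each with at least $2$ vertices. The Cartesian product $G \Box H$ is $1$-perfectly orientable if and only if one of the following holds: (i) $G$ is edgeless and $H$ is $1$-perfectly orientable, or vice versa (i.e. $H$ is edgeless and $G$ is $1$-perfectly orientable); (ii) $G\cong pK_1+qK_2$ and $H\cong rK_1+sK_2$ for some integers $p,q,r,s\ge 0$.
   Context: All graphs are finite and simple. An orientation of a graph $G$ is $1$-perfect if the out-neighborhood of every vertex induces a clique in $G$; $G$ is $1$-perfectly orientable ($1$-p.o.) if it admits a $1$-perfect orientation. The Cartesian product $G\Box H$ has vertex set $V(G)\times V(H)$, with distinct $(u,v),(u',v')$ adjacent iff either $u=u'$ and $vv'\in E(H)$, or $v=v'$ and $uu'\in E(G)$. $G+H$ denotes disjoint union and $kG$ the disjoint union of $k$ copies of $G$; $K_n$ is the complete graph on $n$ vertices. *)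

theory Defs
  imports Main
begin

definition graph :: "'a set \<Rightarrow> ('a \<Rightarrow> 'a \<Rightarrow> bool) \<Rightarrow> bool" where
  "graph V E \<longleftrightarrow> finite V \<and> (\<forall>u v. E u v \<longrightarrow> u \<in> V \<and> v \<in> V \<and> u \<noteq> v \<and> E v u)"

definition orientation :: "'a set \<Rightarrow> ('a \<Rightarrow> 'a \<Rightarrow> bool) \<Rightarrow> ('a \<Rightarrow> 'a \<Rightarrow> bool) \<Rightarrow> bool" where
  "orientation V E D \<longleftrightarrow> (\<forall>u v. D u v \<longrightarrow> E u v) \<and> (\<forall>u v. E u v \<longrightarrow> D u v \<or> D v u)
     \<and> (\<forall>u v. D u v \<longrightarrow> \<not> D v u)"

definition one_perfect_orientation :: "'a set \<Rightarrow> ('a \<Rightarrow> 'a \<Rightarrow> bool) \<Rightarrow> ('a \<Rightarrow> 'a \<Rightarrow> bool) \<Rightarrow> bool" where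
  "one_perfect_orientation V E D \<longleftrightarrow> orientation V E D \<and>
     (\<forall>v\<in>V. \<forall>x y. D v x \<longrightarrow> D v y \<longrightarrow> x \<noteq> y \<longrightarrow> E x y)"

definition one_po :: "'a set \<Rightarrow> ('a \<Rightarrow> 'a \<Rightarrow> bool) \<Rightarrow> bool" where
  "one_po V E \<longleftrightarrow> (\<exists>D. one_perfect_orientation V E D)"

definition edgeless :: "'a set \<Rightarrow> ('a \<Rightarrow> 'a \<Rightarrow> bool) \<Rightarrow> bool" where
  "edgeless V E \<longleftrightarrow> (\<forall>u\<in>V. \<forall>v\<in>V. \<not> E u v)"

text \<open>Cartesian product (vertex set is V1 \<times> V2).\<close>
definition cart_E :: "('a \<Rightarrow> 'a \<Rightarrow> bool) \<Rightarrow> ('b \<Rightarrow> 'b \<Rightarrow> bool) \<Rightarrow> ('a \<times> 'b) \<Rightarrow> ('a \<times> 'b) \<Rightarrow> bool" where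
  "cart_E E1 E2 x y \<longleftrightarrow> (fst x = fst y \<and> E2 (snd x) (snd y)) \<or> (snd x = snd y \<and> E1 (fst x) (fst y))"

definition iso :: "'a set \<Rightarrow> ('a \<Rightarrow> 'a \<Rightarrow> bool) \<Rightarrow> 'b set \<Rightarrow> ('b \<Rightarrow> 'b \<Rightarrow> bool) \<Rightarrow> bool" where
  "iso V E W F \<longleftrightarrow> (\<exists>f. bij_betw f V W \<and> (\<forall>u\<in>V. \<forall>v\<in>V. E u v \<longleftrightarrow> F (f u) (f v)))"

text \<open>The graph pK_1 + qK_2: isolated vertices Inl i (i < p) and edges
  Inr (j,False) -- Inr (j,True) for j < q.\<close>
definition K1K2_V :: "nat \<Rightarrow> nat \<Rightarrow> (nat + nat \<times> bool) set" where
  "K1K2_V p q = Inl ` {..<p} \<union> Inr ` ({..<q} \<times> UNIV)"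

definition K1K2_E :: "(nat + nat \<times> bool) \<Rightarrow> (nat + nat \<times> bool) \<Rightarrow> bool" where
  "K1K2_E x y \<longleftrightarrow> (\<exists>j b b'. x = Inr (j, b) \<and> y = Inr (j, b') \<and> b \<noteq> b')"

end

theory Submission
  imports Defs
begin

text \<open>Every layer of \<open>G \<box> H\<close> is an induced copy of a factor, which settles the case of an
  edgeless factor. If both factors have an edge, neither has a vertex of degree two: a chordless
  4-cycle can only be oriented cyclically in a 1-perfect orientation, and two squares of the
  product sharing an edge then force an out-neighbourhood that is not a clique. So both factors
  have maximum degree at most one, i.e. are of the form \<open>pK\<^sub>1 + qK\<^sub>2\<close>; conversely, for such factors
  2-colourings give an orientation of the product in which every out-degree is at most one.\<close>

definition max_degree_le_one :: "('a \<Rightarrow> 'a \<Rightarrow> bool) \<Rightarrow> bool" where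
  "max_degree_le_one E \<longleftrightarrow> (\<forall>u v w. E u v \<longrightarrow> E u w \<longrightarrow> v = w)"

lemma graph_edge_in_vertices:
  assumes "graph V E" "E u v"
  shows "u \<in> V" "v \<in> V"
  using assms unfolding graph_def by blast+

lemma graph_edge_sym: "graph V E \<Longrightarrow> E u v \<Longrightarrow> E v u"
  unfolding graph_def by blast

lemma graph_irrefl: "graph V E \<Longrightarrow> \<not> E u u"
  unfolding graph_def by blast

lemma cart_E_Pair:
  "cart_E E1 E2 (a, b) (a', b') \<longleftrightarrow> (a = a' \<and> E2 b b') \<or> (b = b' \<and> E1 a a')"
  by (simp add: cart_E_def)

lemma one_perfect_orientationI:
  assumes "\<And>u v. D u v \<Longrightarrow> E u v"
    and "\<And>u v. E u v \<Longrightarrow> D u v \<or> D v u"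
    and "\<And>u v. D u v \<Longrightarrow> \<not> D v u"
    and "\<And>v x y. v \<in> V \<Longrightarrow> D v x \<Longrightarrow> D v y \<Longrightarrow> x \<noteq> y \<Longrightarrow> E x y"
  shows "one_perfect_orientation V E D"
  using assms unfolding one_perfect_orientation_def orientation_def by blast

lemma one_perfect_orientation_arc_edge:
  "one_perfect_orientation V E D \<Longrightarrow> D u v \<Longrightarrow> E u v"
  unfolding one_perfect_orientation_def orientation_def by blast

lemma one_perfect_orientation_edge_oriented:
  "one_perfect_orientation V E D \<Longrightarrow> E u v \<Longrightarrow> D u v \<or> D v u"
  unfolding one_perfect_orientation_def orientation_def by blast

lemma one_perfect_orientation_asym:
  "one_perfect_orientation V E D \<Longrightarrow> D u v \<Longrightarrow> \<not> D v u"
  unfolding one_perfect_orientation_def orientation_def by blast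

lemma one_perfect_orientation_out_adjacent:
  "one_perfect_orientation V E D \<Longrightarrow> v \<in> V \<Longrightarrow> D v x \<Longrightarrow> D v y \<Longrightarrow> x \<noteq> y \<Longrightarrow> E x y"
  unfolding one_perfect_orientation_def by blast

lemma one_po_embedding:
  assumes D: "one_perfect_orientation V E D"
    and "inj f" and "f ` W \<subseteq> V" and "\<And>x y. F x y \<longleftrightarrow> E (f x) (f y)"
  shows "one_po W F"
proof -
  have "one_perfect_orientation W F (\<lambda>x y. D (f x) (f y))"
    using assms one_perfect_orientation_arc_edge[OF D] one_perfect_orientation_edge_oriented[OF D]
      one_perfect_orientation_asym[OF D] one_perfect_orientation_out_adjacent[OF D]
    by (intro one_perfect_orientationI) (auto simp: inj_eq)
  then show ?thesis
    unfolding one_po_def by blast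
qed

text \<open>In a chordless 4-cycle \<open>w x y z\<close> every vertex has exactly one out-neighbour, so the
  orientation is a directed cycle.\<close>

lemma one_perfect_orientation_square_arc_continues:
  assumes D: "one_perfect_orientation V E D"
    and "w \<in> V" "x \<in> V" "y \<in> V" "z \<in> V"
    and "E w x" "E x y" "E y z" "E z w" "\<not> E w y" "\<not> E x z" "w \<noteq> y" "x \<noteq> z"
    and "D w x"
  shows "D x y"
  using assms one_perfect_orientation_edge_oriented[OF D] one_perfect_orientation_asym[OF D]
    one_perfect_orientation_out_adjacent[OF D] by metis

subsection \<open>Graphs of maximum degree at most one\<close>

lemma K1K2_E_simps [simp]:
  "\<not> K1K2_E (Inl i) y" "\<not> K1K2_E x (Inl i)"
  "K1K2_E (Inr (j, b)) (Inr (j', b')) \<longleftrightarrow> j = j' \<and> b \<noteq> b'"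
  unfolding K1K2_E_def by auto

lemma iso_K1K2_max_degree_le_one:
  assumes "graph V E" and "iso V E (K1K2_V p q) K1K2_E"
  shows "max_degree_le_one E"
  unfolding max_degree_le_one_def
proof (intro allI impI)
  fix u v w assume "E u v" "E u w"
  then have V: "u \<in> V" "v \<in> V" "w \<in> V"
    using graph_edge_in_vertices[OF assms(1)] by blast+
  obtain f where f: "bij_betw f V (K1K2_V p q)" "\<forall>x\<in>V. \<forall>y\<in>V. E x y \<longleftrightarrow> K1K2_E (f x) (f y)"
    using assms(2) unfolding iso_def by blast
  have "f v = f w"
    using f(2) V \<open>E u v\<close> \<open>E u w\<close> unfolding K1K2_E_def by fastforce
  then show "v = w"
    using f(1) V by (meson bij_betw_imp_inj_on inj_onD)
qed

lemma max_degree_le_one_bipartition: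
  assumes "graph V E" and "max_degree_le_one E"
  obtains T where "\<And>u v. E u v \<Longrightarrow> u \<in> T \<longleftrightarrow> v \<notin> T"
proof -
  have "finite V"
    using assms(1) unfolding graph_def by blast
  then obtain \<nu> :: "'a \<Rightarrow> nat" where \<nu>: "inj_on \<nu> V"
    using finite_imp_inj_to_nat_seg by meson
  define T where "T = {x. \<exists>y. E x y \<and> \<nu> x < \<nu> y}"
  have T_iff: "x \<in> T \<longleftrightarrow> \<nu> x < \<nu> y" if "E x y" for x y
    using assms(2) that unfolding T_def max_degree_le_one_def by blast
  show thesis
  proof (rule that[of T])
    fix u v assume uv: "E u v"
    have "u \<in> V" "v \<in> V" "u \<noteq> v"
      using uv graph_edge_in_vertices[OF assms(1)] graph_irrefl[OF assms(1)] by blast+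
    then have "\<nu> u \<noteq> \<nu> v"
      using \<nu> by (simp add: inj_on_eq_iff)
    then show "u \<in> T \<longleftrightarrow> v \<notin> T"
      using T_iff[OF uv] T_iff[OF graph_edge_sym[OF assms(1) uv]] by linarith
  qed
qed

lemma max_degree_le_one_edge_representatives:
  assumes g: "graph V E" and deg: "max_degree_le_one E"
  obtains S rep where "S \<subseteq> {v. \<exists>u. E v u}"
    and "\<And>u v. E v u \<Longrightarrow> rep v \<in> S"
    and "\<And>s. s \<in> S \<Longrightarrow> rep s = s"
    and "\<And>u v. \<exists>x. E u x \<Longrightarrow> \<exists>y. E v y \<Longrightarrow> E u v \<longleftrightarrow> rep u = rep v \<and> (u \<in> S \<longleftrightarrow> v \<notin> S)"
proof -
  obtain T where T: "\<And>u v. E u v \<Longrightarrow> u \<in> T \<longleftrightarrow> v \<notin> T"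
    using max_degree_le_one_bipartition[OF assms] by blast
  have uniq: "v = w" if "E u v" "E u w" for u v w
    using deg that unfolding max_degree_le_one_def by blast
  note sym = graph_edge_sym[OF g]
  define mate where "mate v = (THE u. E v u)" for v
  have mate: "mate v = u" if "E v u" for v u
    unfolding mate_def using that uniq by blast
  define S where "S = {v \<in> T. \<exists>u. E v u}"
  define rep where "rep v = (if v \<in> S then v else mate v)" for v
  show thesis
  proof (rule that[of S rep])
    show "rep v \<in> S" if "E v u" for u v
      using that T[OF that] mate[OF that] sym[OF that] unfolding S_def rep_def by auto
    show "E u v \<longleftrightarrow> rep u = rep v \<and> (u \<in> S \<longleftrightarrow> v \<notin> S)" if "\<exists>x. E u x" "\<exists>y. E v y" for u v
      using that T mate sym uniq unfolding S_def rep_def by (smt (verit, ccfv_threshold) mem_Collect_eq)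
  qed (auto simp: S_def rep_def)
qed

definition isolated :: "'a set \<Rightarrow> ('a \<Rightarrow> 'a \<Rightarrow> bool) \<Rightarrow> 'a set" where
  "isolated V E = {v \<in> V. \<forall>u. \<not> E v u}"

lemma not_isolated_imp_edge: "v \<in> V \<Longrightarrow> v \<notin> isolated V E \<Longrightarrow> \<exists>u. E v u"
  unfolding isolated_def by blast

context
  fixes V :: "'a set" and E :: "'a \<Rightarrow> 'a \<Rightarrow> bool" and S :: "'a set" and rep :: "'a \<Rightarrow> 'a"
    and \<iota> \<kappa> :: "'a \<Rightarrow> nat"
  assumes g: "graph V E" and deg: "max_degree_le_one E"
    and S: "S \<subseteq> {v. \<exists>u. E v u}"
    and rep: "\<And>u v. E v u \<Longrightarrow> rep v \<in> S" and rep_S: "\<And>s. s \<in> S \<Longrightarrow> rep s = s"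
    and edge_rep: "\<And>u v. \<exists>x. E u x \<Longrightarrow> \<exists>y. E v y \<Longrightarrow> E u v \<longleftrightarrow> rep u = rep v \<and> (u \<in> S \<longleftrightarrow> v \<notin> S)"
    and \<iota>: "bij_betw \<iota> (isolated V E) {0..<card (isolated V E)}"
    and \<kappa>: "bij_betw \<kappa> S {0..<card S}"
begin

text \<open>Isolated vertices are numbered by \<open>\<iota>\<close>, edges by \<open>\<kappa>\<close> of their representative; the
  Boolean is true exactly at the non-representative endpoint.\<close>

definition K1K2_label :: "'a \<Rightarrow> nat + nat \<times> bool" where
  "K1K2_label v = (if v \<in> isolated V E then Inl (\<iota> v) else Inr (\<kappa> (rep v), v \<notin> S))"

lemma K1K2_label_rep_eq:
  "\<exists>x. E u x \<Longrightarrow> \<exists>y. E v y \<Longrightarrow> \<kappa> (rep u) = \<kappa> (rep v) \<longleftrightarrow> rep u = rep v"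
  using rep inj_on_eq_iff[OF bij_betw_imp_inj_on[OF \<kappa>]] by blast

lemma K1K2_label_inj: "inj_on K1K2_label V"
proof (rule inj_onI)
  fix u v assume uv: "u \<in> V" "v \<in> V" and "K1K2_label u = K1K2_label v"
  show "u = v"
  proof (cases "u \<in> isolated V E")
    case True
    then have "v \<in> isolated V E" "\<iota> u = \<iota> v"
      using \<open>K1K2_label u = K1K2_label v\<close> unfolding K1K2_label_def by (auto split: if_splits)
    then show ?thesis
      using True \<iota> by (meson bij_betw_imp_inj_on inj_onD)
  next
    case False
    then have "v \<notin> isolated V E" and same: "rep u = rep v" "u \<in> S \<longleftrightarrow> v \<in> S"
      using \<open>K1K2_label u = K1K2_label v\<close> K1K2_label_rep_eq not_isolated_imp_edge[of _ V E] uv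
      unfolding K1K2_label_def by (auto split: if_splits)
    then have u: "\<exists>x. E u x" and v: "\<exists>x. E v x"
      using False not_isolated_imp_edge[of _ V E] uv by blast+
    have "rep u \<in> S"
      using u rep by blast
    text \<open>Otherwise \<open>u\<close> and \<open>v\<close> are both neighbours of their common representative.\<close>
    then have "E (rep u) u" "E (rep u) v" if "u \<notin> S"
      using that same rep_S u v S edge_rep[of "rep u" u] edge_rep[of "rep u" v] by auto
    then show ?thesis
      using same rep_S deg unfolding max_degree_le_one_def by metis
  qed
qed

lemma K1K2_label_image: "K1K2_label ` V = K1K2_V (card (isolated V E)) (card S)"
proof
  show "K1K2_label ` V \<subseteq> K1K2_V (card (isolated V E)) (card S)"
  proof (rule image_subsetI)
    fix v assume "v \<in> V"
    then have "v \<notin> isolated V E \<Longrightarrow> rep v \<in> S"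
      using rep not_isolated_imp_edge[of _ V E] by blast
    then show "K1K2_label v \<in> K1K2_V (card (isolated V E)) (card S)"
      using bij_betw_apply[OF \<iota>, of v] bij_betw_apply[OF \<kappa>, of "rep v"]
      unfolding K1K2_label_def K1K2_V_def by auto
  qed
next
  show "K1K2_V (card (isolated V E)) (card S) \<subseteq> K1K2_label ` V"
  proof
    fix x assume "x \<in> K1K2_V (card (isolated V E)) (card S)"
    then consider i where "i \<in> \<iota> ` isolated V E" "x = Inl i" | j b where "j \<in> \<kappa> ` S" "x = Inr (j, b)"
      using \<iota> \<kappa> unfolding K1K2_V_def bij_betw_def by auto
    then show "x \<in> K1K2_label ` V"
    proof cases
      case (1 i)
      then show ?thesis
        unfolding K1K2_label_def isolated_def by auto
    next
      case (2 j b)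
      then obtain s where s: "s \<in> S" "j = \<kappa> s"
        by blast
      then obtain u where "E s u"
        using S by blast
      then have "u \<notin> S" "rep u = s" "s \<notin> isolated V E" "u \<notin> isolated V E"
        using s rep_S edge_rep[of s u] graph_edge_sym[OF g \<open>E s u\<close>] unfolding isolated_def by auto
      then have "x = K1K2_label (if b then u else s)"
        using s 2 rep_S unfolding K1K2_label_def by auto
      moreover have "s \<in> V" "u \<in> V"
        using graph_edge_in_vertices[OF g \<open>E s u\<close>] by blast+
      ultimately show ?thesis
        by simp
    qed
  qed
qed

lemma K1K2_label_edge:
  assumes "u \<in> V" "v \<in> V"
  shows "E u v \<longleftrightarrow> K1K2_E (K1K2_label u) (K1K2_label v)"
proof (cases "u \<in> isolated V E \<or> v \<in> isolated V E")
  case True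
  then show ?thesis
    using graph_edge_sym[OF g] unfolding K1K2_label_def isolated_def by auto
next
  case False
  then show ?thesis
    using assms not_isolated_imp_edge[of _ V E] edge_rep[of u v] K1K2_label_rep_eq[of u v]
    unfolding K1K2_label_def by auto
qed

end

lemma max_degree_le_one_iso_K1K2:
  assumes g: "graph V E" and deg: "max_degree_le_one E"
  shows "\<exists>p q. iso V E (K1K2_V p q) K1K2_E"
proof -
  obtain S rep where S: "S \<subseteq> {v. \<exists>u. E v u}"
    and rep: "\<And>u v. E v u \<Longrightarrow> rep v \<in> S" and rep_S: "\<And>s. s \<in> S \<Longrightarrow> rep s = s"
    and edge_rep: "\<And>u v. \<exists>x. E u x \<Longrightarrow> \<exists>y. E v y \<Longrightarrow> E u v \<longleftrightarrow> rep u = rep v \<and> (u \<in> S \<longleftrightarrow> v \<notin> S)"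
    using max_degree_le_one_edge_representatives[OF assms] by blast
  have "isolated V E \<subseteq> V" "S \<subseteq> V"
    using S graph_edge_in_vertices[OF g] unfolding isolated_def by auto
  then have "finite (isolated V E)" "finite S"
    using g finite_subset unfolding graph_def by blast+
  then obtain \<iota> \<kappa> where \<iota>: "bij_betw \<iota> (isolated V E) {0..<card (isolated V E)}"
    and \<kappa>: "bij_betw \<kappa> S {0..<card S}"
    by (meson ex_bij_betw_finite_nat)
  note labelling = g deg S rep rep_S edge_rep \<iota> \<kappa>
  have "inj_on (K1K2_label V E S rep \<iota> \<kappa>) V"
    by (rule K1K2_label_inj) (fact labelling)+
  moreover have "K1K2_label V E S rep \<iota> \<kappa> ` V = K1K2_V (card (isolated V E)) (card S)"
    by (rule K1K2_label_image) (fact labelling)+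
  moreover have "E u v \<longleftrightarrow> K1K2_E (K1K2_label V E S rep \<iota> \<kappa> u) (K1K2_label V E S rep \<iota> \<kappa> v)"
    if "u \<in> V" "v \<in> V" for u v
    by (rule K1K2_label_edge) (fact labelling that)+
  ultimately show ?thesis
    unfolding iso_def bij_betw_def by blast
qed

lemma iso_K1K2_iff_max_degree_le_one:
  "graph V E \<Longrightarrow> (\<exists>p q. iso V E (K1K2_V p q) K1K2_E) \<longleftrightarrow> max_degree_le_one E"
  using iso_K1K2_max_degree_le_one max_degree_le_one_iso_K1K2 by blast

subsection \<open>Necessity\<close>

lemma one_po_cart_swap:
  assumes "one_po (V1 \<times> V2) (cart_E E1 E2)"
  shows "one_po (V2 \<times> V1) (cart_E E2 E1)"
proof -
  obtain D where D: "one_perfect_orientation (V1 \<times> V2) (cart_E E1 E2) D"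
    using assms unfolding one_po_def by blast
  show ?thesis
    by (rule one_po_embedding[OF D, of prod.swap]) (auto simp: cart_E_def)
qed

lemma one_po_cart_layer:
  assumes "graph V1 E1" and "one_po (V1 \<times> V2) (cart_E E1 E2)" and "a \<in> V1"
  shows "one_po V2 E2"
proof -
  obtain D where D: "one_perfect_orientation (V1 \<times> V2) (cart_E E1 E2) D"
    using assms(2) unfolding one_po_def by blast
  show ?thesis
    by (rule one_po_embedding[OF D, of "Pair a"])
      (use assms(3) graph_irrefl[OF assms(1)] in \<open>auto simp: cart_E_Pair intro: injI\<close>)
qed

lemma one_po_cart_imp_max_degree_le_one:
  assumes g1: "graph V1 E1" and g2: "graph V2 E2"
    and "one_po (V1 \<times> V2) (cart_E E1 E2)" and "E1 a a'"
  shows "max_degree_le_one E2"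
  unfolding max_degree_le_one_def
proof (intro allI impI, rule ccontr)
  fix b b1 b2 assume b1: "E2 b b1" and b2: "E2 b b2" and "b1 \<noteq> b2"
  obtain D where D: "one_perfect_orientation (V1 \<times> V2) (cart_E E1 E2) D"
    using assms(3) unfolding one_po_def by blast
  obtain u u' where uu': "E1 u u'" and arc: "D (u, b) (u', b)"
    using one_perfect_orientation_edge_oriented[OF D, of "(a, b)" "(a', b)"] \<open>E1 a a'\<close>
      graph_edge_sym[OF g1] by (auto simp: cart_E_Pair)
  have V1: "u \<in> V1" "u' \<in> V1" "u \<noteq> u'"
    using uu' graph_edge_in_vertices[OF g1] graph_irrefl[OF g1] by blast+
  have square: "D (u', b) (u', c) \<and> D (u', c) (u, c)" if "E2 b c" for c
  proof -
    have V2: "b \<in> V2" "c \<in> V2" "b \<noteq> c"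
      using that graph_edge_in_vertices[OF g2] graph_irrefl[OF g2] by blast+
    note continues = one_perfect_orientation_square_arc_continues[OF D]
    have "D (u', b) (u', c)"
      by (rule continues[of "(u, b)" _ _ "(u, c)"])
        (use V1 V2 that uu' arc in \<open>auto simp: cart_E_Pair intro: graph_edge_sym[OF g1] graph_edge_sym[OF g2]\<close>)
    moreover have "D (u', c) (u, c)"
      by (rule continues[of "(u', b)" _ _ "(u, b)"])
        (use V1 V2 that uu' \<open>D (u', b) (u', c)\<close> in \<open>auto simp: cart_E_Pair intro: graph_edge_sym[OF g1] graph_edge_sym[OF g2]\<close>)
    ultimately show ?thesis ..
  qed
  have "b \<in> V2" "b1 \<in> V2" "b2 \<in> V2"
    using b1 b2 graph_edge_in_vertices[OF g2] by blast+
  text \<open>The head \<open>(u', b)\<close> of the shared edge has out-neighbours \<open>(u', b\<^sub>1)\<close> and \<open>(u', b\<^sub>2)\<close>.\<close>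
  have "E2 b1 b2"
    using one_perfect_orientation_out_adjacent[OF D, of "(u', b)" "(u', b1)" "(u', b2)"]
      square[OF b1] square[OF b2] V1 \<open>b \<in> V2\<close> \<open>b1 \<noteq> b2\<close>
    by (auto simp: cart_E_Pair)
  then show False
    using one_perfect_orientation_edge_oriented[OF D, of "(u', b1)" "(u', b2)"]
      one_perfect_orientation_out_adjacent[OF D, of "(u', b1)" "(u, b1)" "(u', b2)"]
      one_perfect_orientation_out_adjacent[OF D, of "(u', b2)" "(u, b2)" "(u', b1)"]
      square[OF b1] square[OF b2] V1 \<open>b1 \<in> V2\<close> \<open>b2 \<in> V2\<close> \<open>b1 \<noteq> b2\<close>
    by (auto simp: cart_E_Pair)
qed

subsection \<open>Sufficiency\<close>

lemma one_po_cart_edgeless: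
  assumes "graph V1 E1" and "edgeless V1 E1" and "one_po V2 E2"
  shows "one_po (V1 \<times> V2) (cart_E E1 E2)"
proof -
  have no_edge: "\<not> E1 u v" for u v
    using assms(1,2) graph_edge_in_vertices[OF assms(1)] unfolding edgeless_def by blast
  obtain D where D: "one_perfect_orientation V2 E2 D"
    using assms(3) unfolding one_po_def by blast
  have "one_perfect_orientation (V1 \<times> V2) (cart_E E1 E2) (\<lambda>x y. fst x = fst y \<and> D (snd x) (snd y))"
    using no_edge one_perfect_orientation_arc_edge[OF D] one_perfect_orientation_edge_oriented[OF D]
      one_perfect_orientation_asym[OF D] one_perfect_orientation_out_adjacent[OF D]
    by (intro one_perfect_orientationI) (auto simp: cart_E_def prod_eq_iff)
  then show ?thesis
    unfolding one_po_def by blast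
qed

lemma max_degree_le_one_imp_one_po_cart:
  assumes g1: "graph V1 E1" and g2: "graph V2 E2"
    and deg1: "max_degree_le_one E1" and deg2: "max_degree_le_one E2"
  shows "one_po (V1 \<times> V2) (cart_E E1 E2)"
proof -
  obtain T1 where T1: "\<And>u v. E1 u v \<Longrightarrow> u \<in> T1 \<longleftrightarrow> v \<notin> T1"
    using max_degree_le_one_bipartition[OF g1 deg1] by blast
  obtain T2 where T2: "\<And>u v. E2 u v \<Longrightarrow> u \<in> T2 \<longleftrightarrow> v \<notin> T2"
    using max_degree_le_one_bipartition[OF g2 deg2] by blast
  text \<open>A vertex whose two colours agree sends its arc along its \<open>E1\<close>-edge, otherwise along its
    \<open>E2\<close>-edge, so every out-degree is at most one.\<close>
  define D where "D x y \<longleftrightarrow> cart_E E1 E2 x y \<and> ((fst x \<in> T1 \<longleftrightarrow> snd x \<in> T2) \<longleftrightarrow> snd x = snd y)"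
    for x y
  have one_way: "D x y \<longleftrightarrow> \<not> D y x" if "cart_E E1 E2 x y" for x y
    using that T1 T2 graph_irrefl[OF g1] graph_irrefl[OF g2] graph_edge_sym[OF g1] graph_edge_sym[OF g2]
    unfolding D_def cart_E_def by (smt (verit))
  have out_unique: "x = y" if "D v x" "D v y" for v x y
    using that deg1 deg2 graph_irrefl[OF g1] graph_irrefl[OF g2]
    unfolding D_def cart_E_def max_degree_le_one_def by (auto simp: prod_eq_iff)
  have "one_perfect_orientation (V1 \<times> V2) (cart_E E1 E2) D"
    by (rule one_perfect_orientationI) (use one_way out_unique in \<open>auto simp: D_def\<close>)
  then show ?thesis
    unfolding one_po_def by blast
qed

theorem theorem7:
  fixes V1 :: "'a set" and E1 :: "'a \<Rightarrow> 'a \<Rightarrow> bool"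
    and V2 :: "'b set" and E2 :: "'b \<Rightarrow> 'b \<Rightarrow> bool"
  assumes "graph V1 E1" and "graph V2 E2"
    and "card V1 \<ge> 2" and "card V2 \<ge> 2"
  shows "one_po (V1 \<times> V2) (cart_E E1 E2) \<longleftrightarrow>
     ((edgeless V1 E1 \<and> one_po V2 E2) \<or> (edgeless V2 E2 \<and> one_po V1 E1)) \<or>
     (\<exists>p q r s. iso V1 E1 (K1K2_V p q) K1K2_E \<and> iso V2 E2 (K1K2_V r s) K1K2_E)"
proof -
  note g1 = assms(1) and g2 = assms(2)
  have "V1 \<noteq> {}" "V2 \<noteq> {}"
    using assms(3,4) by auto
  have swap: "one_po (V1 \<times> V2) (cart_E E1 E2) \<longleftrightarrow> one_po (V2 \<times> V1) (cart_E E2 E1)"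
    using one_po_cart_swap[of V1 V2 E1 E2] one_po_cart_swap[of V2 V1 E2 E1] by blast
  have "one_po (V1 \<times> V2) (cart_E E1 E2) \<longleftrightarrow>
     (edgeless V1 E1 \<and> one_po V2 E2) \<or> (edgeless V2 E2 \<and> one_po V1 E1) \<or>
     (max_degree_le_one E1 \<and> max_degree_le_one E2)"
  proof (intro iffI)
    assume po: "one_po (V1 \<times> V2) (cart_E E1 E2)"
    show "(edgeless V1 E1 \<and> one_po V2 E2) \<or> (edgeless V2 E2 \<and> one_po V1 E1) \<or>
      (max_degree_le_one E1 \<and> max_degree_le_one E2)"
      using one_po_cart_layer[OF g1 po] one_po_cart_layer[OF g2 po[unfolded swap]]
        one_po_cart_imp_max_degree_le_one[OF g1 g2 po]
        one_po_cart_imp_max_degree_le_one[OF g2 g1 po[unfolded swap]]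
        \<open>V1 \<noteq> {}\<close> \<open>V2 \<noteq> {}\<close> unfolding edgeless_def by blast
  qed (use one_po_cart_edgeless[OF g1] one_po_cart_edgeless[OF g2] swap
        max_degree_le_one_imp_one_po_cart[OF g1 g2] in blast)
  then show ?thesis
    using iso_K1K2_iff_max_degree_le_one[OF g1] iso_K1K2_iff_max_degree_le_one[OF g2] by blast
qed

end
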